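(* On the Lie algebra $\mathfrak{r}_2\mathfrak{r}_2$ with basis $e_1,\dots,e_4$, non-zero brackets $[e_1,e_2]=e_2$, $[e_3,e_4]=e_4$, and orientation $\mu=e^{1234}$, define $J$ by $Je_1=\tfrac{1}{\sqrt2}(e_2-e_4)$, $Je_2=\tfrac{1}{\sqrt2}(-e_1-e_3)$, $Je_3=\tfrac{1}{\sqrt2}(e_2+e_4)$, $Je_4=\tfrac{1}{\sqrt2}(e_1-e_3)$. Then $J$ is an almost complex structure inducing the orientation $\mu$, $J$ is tamed by the symplectic form $e^{12}+e^{34}$, and $J$ is not compatible with any symplectic form on $\mathfrak{r}_2\mathfrak{r}_2$. *)

theory Defs
  imports "HOL-Analysis.Analysis" "HOL-Library.Numeral_Type"
begin

text \<open>The Lie algebra r2r2 is modelled on real^4; the basis vector e_i is axis i 1,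
  and the coordinate of x along e_i is x$i (i = 1,2,3,4 are the four distinct
  elements of the index type 4).\<close>

definition ebas :: "4 \<Rightarrow> real^4" where
  "ebas i = axis i 1"

definition r2r2_bracket :: "real^4 \<Rightarrow> real^4 \<Rightarrow> real^4" where
  "r2r2_bracket x y = (x$1 * y$2 - x$2 * y$1) *\<^sub>R ebas 2 + (x$3 * y$4 - x$4 * y$3) *\<^sub>R ebas 4"

definition mu1234 :: "real^4 \<Rightarrow> real^4 \<Rightarrow> real^4 \<Rightarrow> real^4 \<Rightarrow> real" where
  "mu1234 a b c d = det ((\<chi> i. if i = 1 then a else if i = 2 then b else if i = 3 then c else d) :: real^4^4)"

definition omega0 :: "real^4 \<Rightarrow> real^4 \<Rightarrow> real" where
  "omega0 x y = x$1 * y$2 - x$2 * y$1 + x$3 * y$4 - x$4 * y$3"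

definition Jmap :: "real^4 \<Rightarrow> real^4" where
  "Jmap x =
     x$1 *\<^sub>R ((1 / sqrt 2) *\<^sub>R (ebas 2 - ebas 4))
   + x$2 *\<^sub>R ((1 / sqrt 2) *\<^sub>R (- ebas 1 - ebas 3))
   + x$3 *\<^sub>R ((1 / sqrt 2) *\<^sub>R (ebas 2 + ebas 4))
   + x$4 *\<^sub>R ((1 / sqrt 2) *\<^sub>R (ebas 1 - ebas 3))"

definition almost_complex :: "('a::real_vector \<Rightarrow> 'a) \<Rightarrow> bool" where
  "almost_complex J \<longleftrightarrow> linear J \<and> (\<forall>x. J (J x) = - x)"

text \<open>J (on a 4-dimensional space) induces the orientation of the volume form mu:
  every complex basis (v, Jv, w, Jw) is positively oriented with respect to mu.\<close>
definition induces_orientation :: "(real^4 \<Rightarrow> real^4) \<Rightarrow> (real^4 \<Rightarrow> real^4 \<Rightarrow> real^4 \<Rightarrow> real^4 \<Rightarrow> real) \<Rightarrow> bool" where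
  "induces_orientation J mu \<longleftrightarrow>
     (\<forall>v w. mu v (J v) w (J w) \<noteq> 0 \<longrightarrow> mu v (J v) w (J w) > 0)"

text \<open>Symplectic form on a Lie algebra with bracket br: skew-symmetric bilinear,
  nondegenerate, and closed for the Chevalley-Eilenberg differential.\<close>
definition symplectic_form :: "('a::real_vector \<Rightarrow> 'a \<Rightarrow> 'a) \<Rightarrow> ('a \<Rightarrow> 'a \<Rightarrow> real) \<Rightarrow> bool" where
  "symplectic_form br \<omega> \<longleftrightarrow>
     bilinear \<omega> \<and> (\<forall>x y. \<omega> x y = - \<omega> y x) \<and>
     (\<forall>x. x \<noteq> 0 \<longrightarrow> (\<exists>y. \<omega> x y \<noteq> 0)) \<and>
     (\<forall>x y z. \<omega> (br x y) z + \<omega> (br y z) x + \<omega> (br z x) y = 0)"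

definition tames :: "('a::real_vector \<Rightarrow> 'a \<Rightarrow> real) \<Rightarrow> ('a \<Rightarrow> 'a) \<Rightarrow> bool" where
  "tames \<omega> J \<longleftrightarrow> (\<forall>x. x \<noteq> 0 \<longrightarrow> \<omega> x (J x) > 0)"

definition compatible :: "('a::real_vector \<Rightarrow> 'a \<Rightarrow> real) \<Rightarrow> ('a \<Rightarrow> 'a) \<Rightarrow> bool" where
  "compatible \<omega> J \<longleftrightarrow> tames \<omega> J \<and> (\<forall>x y. \<omega> (J x) (J y) = \<omega> x y)"

end

theory Submission
  imports Defs
begin

text \<open>
  In coordinates, \<open>\<omega>\<^sub>0(x, Jx) = |x|\<^sup>2 / \<surd>2\<close>, so \<open>J\<close> is tamed by \<open>\<omega>\<^sub>0 = e\<^sup>1\<^sup>2 + e\<^sup>3\<^sup>4\<close>, and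
  \<open>\<mu>(v, Jv, w, Jw)\<close> is a sum of squares, so \<open>J\<close> induces the orientation \<open>\<mu>\<close>.
  For an arbitrary closed 2-form \<open>\<omega>\<close>, closedness evaluated on \<open>(e\<^sub>1, e\<^sub>3, e\<^sub>4)\<close> and
  \<open>(e\<^sub>1, e\<^sub>2, e\<^sub>3)\<close> kills \<open>\<omega>\<^sub>1\<^sub>4\<close> and \<open>\<omega>\<^sub>2\<^sub>3\<close>. Then \<open>J\<close>-invariance on \<open>(e\<^sub>1, e\<^sub>2)\<close> reads
  \<open>\<omega>\<^sub>1\<^sub>2 = (\<omega>\<^sub>1\<^sub>2 - \<omega>\<^sub>3\<^sub>4) / 2\<close>, i.e. \<open>\<omega>\<^sub>3\<^sub>4 = -\<omega>\<^sub>1\<^sub>2\<close>, whereas taming at \<open>e\<^sub>1\<close> and \<open>e\<^sub>3\<close> gives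
  \<open>\<omega>\<^sub>1\<^sub>2 > 0\<close> and \<open>\<omega>\<^sub>3\<^sub>4 > 0\<close>.
\<close>

lemma vec_eq_iff_4: "(x::'a^4) = y \<longleftrightarrow> x$1 = y$1 \<and> x$2 = y$2 \<and> x$3 = y$3 \<and> x$4 = y$4"
  by (simp add: vec_eq_iff forall_4)

lemma det_4x4:
  "det (A::'a::comm_ring_1^4^4) =
    A$1$1 * (A$2$2 * A$3$3 * A$4$4 + A$2$3 * A$3$4 * A$4$2 + A$2$4 * A$3$2 * A$4$3
             - A$2$2 * A$3$4 * A$4$3 - A$2$3 * A$3$2 * A$4$4 - A$2$4 * A$3$3 * A$4$2)
  - A$1$2 * (A$2$1 * A$3$3 * A$4$4 + A$2$3 * A$3$4 * A$4$1 + A$2$4 * A$3$1 * A$4$3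
             - A$2$1 * A$3$4 * A$4$3 - A$2$3 * A$3$1 * A$4$4 - A$2$4 * A$3$3 * A$4$1)
  + A$1$3 * (A$2$1 * A$3$2 * A$4$4 + A$2$2 * A$3$4 * A$4$1 + A$2$4 * A$3$1 * A$4$2
             - A$2$1 * A$3$4 * A$4$2 - A$2$2 * A$3$1 * A$4$4 - A$2$4 * A$3$2 * A$4$1)
  - A$1$4 * (A$2$1 * A$3$2 * A$4$3 + A$2$2 * A$3$3 * A$4$1 + A$2$3 * A$3$1 * A$4$2
             - A$2$1 * A$3$3 * A$4$2 - A$2$2 * A$3$1 * A$4$3 - A$2$3 * A$3$2 * A$4$1)"
proof -
  have "finite {2::4, 3, 4}" "1 \<notin> {2::4, 3, 4}"
    and "finite {3::4, 4}" "2 \<notin> {3::4, 4}"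
    and "finite {4::4}" "3 \<notin> {4::4}" by auto
  note expand = sum_over_permutations_insert[OF this(1,2)] sum_over_permutations_insert[OF this(3,4)]
    sum_over_permutations_insert[OF this(5,6)]
  show ?thesis
    unfolding det_def UNIV_4 expand permutes_sing
    by (simp add: sign_swap_id permutation_swap_id sign_compose permutation_compose swap_id_eq algebra_simps)
qed

lemma tames_imp_nondegenerate:
  assumes "tames \<omega> J" and "x \<noteq> 0"
  shows "\<exists>y. \<omega> x y \<noteq> 0"
  using assms unfolding tames_def by (metis less_irrefl)

lemma ebas_nth [simp]: "ebas i $ j = (if j = i then 1 else 0)"
  by (simp add: ebas_def axis_def)

lemma Jmap_ebas:
  "Jmap (ebas 1) = (1 / sqrt 2) *\<^sub>R (ebas 2 - ebas 4)"
  "Jmap (ebas 2) = (1 / sqrt 2) *\<^sub>R (- ebas 1 - ebas 3)"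
  "Jmap (ebas 3) = (1 / sqrt 2) *\<^sub>R (ebas 2 + ebas 4)"
  "Jmap (ebas 4) = (1 / sqrt 2) *\<^sub>R (ebas 1 - ebas 3)"
  by (simp_all add: Jmap_def)

lemma Jmap_nth:
  "Jmap x $ 1 = (x$4 - x$2) / sqrt 2"
  "Jmap x $ 2 = (x$1 + x$3) / sqrt 2"
  "Jmap x $ 3 = - (x$2 + x$4) / sqrt 2"
  "Jmap x $ 4 = (x$3 - x$1) / sqrt 2"
  by (simp_all add: Jmap_def field_simps)

lemma mu1234_Jmap:
  "mu1234 v (Jmap v) w (Jmap w) =
     ((2 * v$1 * w$3 - 2 * v$3 * w$1 - (v$2 - v$4) * (w$2 + w$4) + (v$2 + v$4) * (w$2 - w$4))\<^sup>2
      + 2 * (v$1 * (w$2 + w$4) - v$3 * (w$2 - w$4) + (v$2 - v$4) * w$3 - (v$2 + v$4) * w$1)\<^sup>2) / 4"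
  unfolding mu1234_def det_4x4 by (simp add: Jmap_nth divide_simps power2_eq_square) algebra

lemma almost_complex_Jmap: "almost_complex Jmap"
  unfolding almost_complex_def
proof
  show "linear Jmap"
    by (rule linearI)
      (simp_all add: vec_eq_iff_4 Jmap_nth add_divide_distrib diff_divide_distrib algebra_simps)
  show "\<forall>x. Jmap (Jmap x) = - x"
    by (simp add: vec_eq_iff_4 Jmap_nth divide_simps)
qed

lemma omega0_Jmap: "omega0 x (Jmap x) = ((x$1)\<^sup>2 + (x$2)\<^sup>2 + (x$3)\<^sup>2 + (x$4)\<^sup>2) / sqrt 2"
  by (simp add: omega0_def Jmap_nth divide_simps power2_eq_square) algebra

lemma tames_omega0_Jmap: "tames omega0 Jmap"
  unfolding tames_def
proof (intro allI impI)
  fix x :: "real^4"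
  assume "x \<noteq> 0"
  then have "x$1 \<noteq> 0 \<or> x$2 \<noteq> 0 \<or> x$3 \<noteq> 0 \<or> x$4 \<noteq> 0"
    by (auto simp: vec_eq_iff_4)
  then have "(x$1)\<^sup>2 + (x$2)\<^sup>2 + (x$3)\<^sup>2 + (x$4)\<^sup>2 > 0"
    by (auto simp: add_pos_nonneg add_nonneg_pos)
  then show "omega0 x (Jmap x) > 0"
    by (simp add: omega0_Jmap)
qed

lemma symplectic_form_omega0: "symplectic_form r2r2_bracket omega0"
  unfolding symplectic_form_def
proof (intro conjI allI impI)
  show "bilinear omega0"
    unfolding bilinear_def by (auto intro!: linearI simp: omega0_def algebra_simps)
  show "omega0 x y = - omega0 y x" for x y
    by (simp add: omega0_def)
  show "\<exists>y. omega0 x y \<noteq> 0" if "x \<noteq> 0" for x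
    using tames_imp_nondegenerate[OF tames_omega0_Jmap that] .
  show "omega0 (r2r2_bracket x y) z + omega0 (r2r2_bracket y z) x + omega0 (r2r2_bracket z x) y = 0"
    for x y z
    by (simp add: omega0_def r2r2_bracket_def algebra_simps)
qed

lemma induces_orientation_Jmap: "induces_orientation Jmap mu1234"
  unfolding induces_orientation_def mu1234_Jmap by (auto simp: less_le)

lemma r2r2_closed_form_vanishing:
  assumes "symplectic_form r2r2_bracket \<omega>"
  shows "\<omega> (ebas 1) (ebas 4) = 0" "\<omega> (ebas 2) (ebas 3) = 0"
proof -
  from assms have bil: "bilinear \<omega>"
    and closed: "\<And>x y z. \<omega> (r2r2_bracket x y) z + \<omega> (r2r2_bracket y z) x + \<omega> (r2r2_bracket z x) y = 0"
    and skew: "\<And>x y. \<omega> x y = - \<omega> y x"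
    unfolding symplectic_form_def by blast+
  have br: "r2r2_bracket (ebas 1) (ebas 2) = ebas 2" "r2r2_bracket (ebas 3) (ebas 4) = ebas 4"
    "r2r2_bracket (ebas 1) (ebas 3) = 0" "r2r2_bracket (ebas 3) (ebas 1) = 0"
    "r2r2_bracket (ebas 2) (ebas 3) = 0" "r2r2_bracket (ebas 4) (ebas 1) = 0"
    by (simp_all add: r2r2_bracket_def vec_eq_iff_4)
  show "\<omega> (ebas 1) (ebas 4) = 0"
    using closed[of "ebas 1" "ebas 3" "ebas 4"] skew[of "ebas 4" "ebas 1"]
    by (simp add: br bilinear_lzero[OF bil])
  show "\<omega> (ebas 2) (ebas 3) = 0"
    using closed[of "ebas 1" "ebas 2" "ebas 3"]
    by (simp add: br bilinear_lzero[OF bil])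
qed

lemma no_compatible_symplectic_form_Jmap:
  "\<not> (\<exists>\<omega>. symplectic_form r2r2_bracket \<omega> \<and> compatible \<omega> Jmap)"
proof
  assume "\<exists>\<omega>. symplectic_form r2r2_bracket \<omega> \<and> compatible \<omega> Jmap"
  then obtain \<omega> where sympl: "symplectic_form r2r2_bracket \<omega>" and compat: "compatible \<omega> Jmap"
    by blast
  then have bil: "bilinear \<omega>" and skew: "\<And>x y. \<omega> x y = - \<omega> y x"
    unfolding symplectic_form_def by blast+
  have tame: "\<And>x. x \<noteq> 0 \<Longrightarrow> \<omega> x (Jmap x) > 0" and inv: "\<omega> (Jmap x) (Jmap y) = \<omega> x y" for x y
    using compat unfolding compatible_def tames_def by blast+
  note expand = bilinear_lmul[OF bil] bilinear_rmul[OF bil] bilinear_ladd[OF bil]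
    bilinear_radd[OF bil] bilinear_lsub[OF bil] bilinear_rsub[OF bil]
    bilinear_lneg[OF bil] bilinear_rneg[OF bil]
  note vanish = r2r2_closed_form_vanishing[OF sympl]
  have "ebas 1 \<noteq> 0" "ebas 3 \<noteq> 0" by (simp_all add: vec_eq_iff_4)
  then have "\<omega> (ebas 1) (Jmap (ebas 1)) > 0" "\<omega> (ebas 3) (Jmap (ebas 3)) > 0"
    by (simp_all add: tame)
  then have pos12: "\<omega> (ebas 1) (ebas 2) > 0" and pos34: "\<omega> (ebas 3) (ebas 4) > 0"
    using skew[of "ebas 3" "ebas 2"] by (simp_all add: Jmap_ebas expand vanish zero_less_divide_iff)
  have "\<omega> (ebas 1) (ebas 2) = \<omega> (Jmap (ebas 1)) (Jmap (ebas 2))"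
    by (simp add: inv)
  also have "\<dots> = (\<omega> (ebas 1) (ebas 2) - \<omega> (ebas 3) (ebas 4)) / 2"
    using skew[of "ebas 2" "ebas 1"] skew[of "ebas 3" "ebas 2"] skew[of "ebas 4" "ebas 1"]
      skew[of "ebas 4" "ebas 3"]
    by (simp add: Jmap_ebas expand vanish divide_simps)
  finally show False using pos12 pos34 by simp
qed

theorem mainTheorem3:
  shows "almost_complex Jmap
    \<and> induces_orientation Jmap mu1234
    \<and> symplectic_form r2r2_bracket omega0
    \<and> tames omega0 Jmap
    \<and> \<not> (\<exists>\<omega>. symplectic_form r2r2_bracket \<omega> \<and> compatible \<omega> Jmap)"
  using almost_complex_Jmap induces_orientation_Jmap symplectic_form_omega0
    tames_omega0_Jmap no_compatible_symplectic_form_Jmap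
  by blast

end
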